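(* Let $\mathcal{H}_A,\mathcal{H}_B$ be finite-dimensional Hilbert spaces and $|\Psi\rangle\in\mathcal{H}_A\otimes\mathcal{H}_B$ a unit vector. For a unit vector $|\phi\rangle\in\mathcal{H}_A$ with $(\langle\phi|\otimes\mathbf{1})|\Psi\rangle\neq0$, its relative state is the normalization of $(\langle\phi|\otimes\mathbf{1})|\Psi\rangle\in\mathcal{H}_B$; for a unit vector $|\chi\rangle\in\mathcal{H}_B$ with $(\mathbf{1}\otimes\langle\chi|)|\Psi\rangle\neq0$, its relative state is the normalization of $(\mathbf{1}\otimes\langle\chi|)|\Psi\rangle\in\mathcal{H}_A$. Let $|\phi^{(1)}\rangle\in\mathcal{H}_A$ be a unit vector with $\langle\Psi|(|\phi^{(1)}\rangle\langle\phi^{(1)}|\otimes\mathbf{1})|\Psi\rangle>0$. Then the sequence defined by letting $|\chi^{(i)}\rangle$ be the relative state of $|\phi^{(i)}\rangle$ and $|\phi^{(i+1)}\rangle$ the relative state of $|\chi^{(i)}\rangle$ is well defined for all $i\geq1$, and for every $N\geq1$, $\langle\phi^{(1)}|\phi^{(N)}\rangle\neq0$. *)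

theory Defs
  imports Complex_Main "HOL-Library.Complex_Order"
begin

text \<open>Finite-dimensional Hilbert spaces H_A, H_B are modelled as coordinate spaces
  'a \<Rightarrow> complex and 'b \<Rightarrow> complex over finite index types (orthonormal bases);
  H_A \<otimes> H_B is 'a \<times> 'b \<Rightarrow> complex.\<close>

definition cinner :: "('a::finite \<Rightarrow> complex) \<Rightarrow> ('a \<Rightarrow> complex) \<Rightarrow> complex" where
  "cinner u v = (\<Sum>i\<in>UNIV. cnj (u i) * v i)"

definition vnorm :: "('a::finite \<Rightarrow> complex) \<Rightarrow> real" where
  "vnorm v = sqrt (\<Sum>i\<in>UNIV. (cmod (v i))\<^sup>2)"

definition unit_vec :: "('a::finite \<Rightarrow> complex) \<Rightarrow> bool" where
  "unit_vec v \<longleftrightarrow> vnorm v = 1"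

definition normalize_vec :: "('a::finite \<Rightarrow> complex) \<Rightarrow> ('a \<Rightarrow> complex)" where
  "normalize_vec v = (\<lambda>i. v i / complex_of_real (vnorm v))"

definition contrA :: "('a::finite \<Rightarrow> complex) \<Rightarrow> ('a \<times> 'b::finite \<Rightarrow> complex) \<Rightarrow> ('b \<Rightarrow> complex)" where
  "contrA phi Psi = (\<lambda>j. \<Sum>i\<in>UNIV. cnj (phi i) * Psi (i, j))"

definition contrB :: "('b::finite \<Rightarrow> complex) \<Rightarrow> ('a::finite \<times> 'b \<Rightarrow> complex) \<Rightarrow> ('a \<Rightarrow> complex)" where
  "contrB chi Psi = (\<lambda>i. \<Sum>j\<in>UNIV. cnj (chi j) * Psi (i, j))"

text \<open>relative states (meaningful when the contracted vector is nonzero)\<close>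
definition relA :: "('a::finite \<times> 'b::finite \<Rightarrow> complex) \<Rightarrow> ('a \<Rightarrow> complex) \<Rightarrow> ('b \<Rightarrow> complex)" where
  "relA Psi phi = normalize_vec (contrA phi Psi)"

definition relB :: "('a::finite \<times> 'b::finite \<Rightarrow> complex) \<Rightarrow> ('b \<Rightarrow> complex) \<Rightarrow> ('a \<Rightarrow> complex)" where
  "relB Psi chi = normalize_vec (contrB chi Psi)"

definition projA_tensor_id :: "('a::finite \<Rightarrow> complex) \<Rightarrow> ('a \<times> 'b::finite \<Rightarrow> complex) \<Rightarrow> ('a \<times> 'b \<Rightarrow> complex)" where
  "projA_tensor_id phi Psi = (\<lambda>(i, j). phi i * (\<Sum>i'\<in>UNIV. cnj (phi i') * Psi (i', j)))"

text \<open>phi_seq Psi phi1 n is phi^(n+1); chi_seq Psi phi1 n is chi^(n+1).\<close>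
primrec phi_seq :: "('a::finite \<times> 'b::finite \<Rightarrow> complex) \<Rightarrow> ('a \<Rightarrow> complex) \<Rightarrow> nat \<Rightarrow> ('a \<Rightarrow> complex)" where
  "phi_seq Psi phi1 0 = phi1"
| "phi_seq Psi phi1 (Suc n) = relB Psi (relA Psi (phi_seq Psi phi1 n))"

definition chi_seq :: "('a::finite \<times> 'b::finite \<Rightarrow> complex) \<Rightarrow> ('a \<Rightarrow> complex) \<Rightarrow> nat \<Rightarrow> ('b \<Rightarrow> complex)" where
  "chi_seq Psi phi1 n = relA Psi (phi_seq Psi phi1 n)"

end

theory Submission
  imports Defs
begin

text \<open>
  Let \<open>L\<close> be the reduced density operator of \<open>\<Psi>\<close> on \<open>H_A\<close>, so that
  \<open>\<langle>u|L v\<rangle> = \<langle>(\<langle>u| \<otimes> 1)\<Psi> | (\<langle>v| \<otimes> 1)\<Psi>\<rangle>\<close>. Taking the relative state twice sends \<open>\<phi>\<close>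
  to a positive multiple of \<open>L \<phi>\<close>, so \<open>\<phi>(N)\<close> is a positive multiple of \<open>L^(N-1) \<phi>(1)\<close>.
  Since \<open>L\<close> is self-adjoint, \<open>\<langle>\<phi>(1)|L^(2m) \<phi>(1)\<rangle> = \<parallel>L^m \<phi>(1)\<parallel>\<^sup>2\<close> and
  \<open>\<langle>\<phi>(1)|L^(2m+1) \<phi>(1)\<rangle> = \<parallel>(\<langle>L^m \<phi>(1)| \<otimes> 1)\<Psi>\<parallel>\<^sup>2\<close>. These never vanish: the relative
  state \<open>\<chi>\<close> of \<open>\<phi>\<close> satisfies \<open>\<langle>\<phi>|(1 \<otimes> \<langle>\<chi>|)\<Psi>\<rangle> = \<parallel>(\<langle>\<phi>| \<otimes> 1)\<Psi>\<parallel>\<close>, so nonvanishing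
  propagates from \<open>\<phi>(1)\<close> along the sequence, and symmetrically from \<open>\<chi>\<close> to the next \<open>\<phi>\<close>.
\<close>

lemma cinner_commute: "cinner u v = cnj (cinner v u)"
  unfolding cinner_def by (simp add: ac_simps)

lemma cinner_zero_right [simp]: "cinner u (\<lambda>_. 0) = 0"
  unfolding cinner_def by simp

lemma cinner_zero_left [simp]: "cinner (\<lambda>_. 0) v = 0"
  unfolding cinner_def by simp

lemma cinner_scale_right: "cinner u (\<lambda>i. c * v i) = c * cinner u v"
  unfolding cinner_def by (simp add: sum_distrib_left ac_simps)

lemma cinner_scale_of_real_left: "cinner (\<lambda>i. of_real c * u i) v = of_real c * cinner u v"
  unfolding cinner_def by (simp add: sum_distrib_left ac_simps)

lemma cinner_self_eq_vnorm: "cinner v v = of_real ((vnorm v)\<^sup>2)"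
proof -
  have "cnj (v i) * v i = of_real ((cmod (v i))\<^sup>2)" for i
    using complex_norm_square[of "v i"] by (simp add: mult.commute)
  then show ?thesis
    unfolding cinner_def vnorm_def by (simp add: of_real_sum sum_nonneg)
qed

lemma vnorm_pos: "v \<noteq> (\<lambda>_. 0) \<Longrightarrow> vnorm v > 0"
proof -
  assume "v \<noteq> (\<lambda>_. 0)"
  then obtain i where "v i \<noteq> 0" by auto
  then have "(\<Sum>i\<in>UNIV. (cmod (v i))\<^sup>2) > 0"
    by (intro sum_pos2[of UNIV i]) auto
  then show ?thesis unfolding vnorm_def by simp
qed

lemma of_real_mult_pos: "c > 0 \<Longrightarrow> (z::complex) > 0 \<Longrightarrow> of_real c * z > 0"
  by (auto simp: less_complex_def)

lemma cinner_self_pos: "v \<noteq> (\<lambda>_. 0) \<Longrightarrow> cinner v v > 0"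
  using vnorm_pos[of v] by (simp add: cinner_self_eq_vnorm less_complex_def)

lemma normalize_vec_eq: "normalize_vec v = (\<lambda>i. of_real (1 / vnorm v) * v i)"
  unfolding normalize_vec_def by (simp add: divide_inverse ac_simps)

lemma cinner_normalize_vec_self: "cinner (normalize_vec v) v = of_real (vnorm v)"
proof -
  have "1 / vnorm v * (vnorm v)\<^sup>2 = vnorm v"
    by (cases "vnorm v = 0") (simp_all add: power2_eq_square)
  then show ?thesis
    unfolding normalize_vec_eq cinner_scale_of_real_left cinner_self_eq_vnorm
    by (metis of_real_mult)
qed

lemma cinner_contrA: "cinner chi (contrA phi Psi) = cinner phi (contrB chi Psi)"
  unfolding cinner_def contrA_def contrB_def sum_distrib_left
  by (subst sum.swap) (simp add: ac_simps)

lemma contrB_scale_of_real: "contrB (\<lambda>i. of_real c * v i) Psi = (\<lambda>j. of_real c * contrB v Psi j)"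
  unfolding contrB_def by (simp add: sum_distrib_left ac_simps)

lemma cinner_projA_tensor_id:
  "cinner Psi (projA_tensor_id phi Psi) = cinner (contrA phi Psi) (contrA phi Psi)"
proof -
  have "cinner Psi (projA_tensor_id phi Psi)
      = (\<Sum>i\<in>UNIV. \<Sum>j\<in>UNIV. cnj (Psi (i, j)) * (phi i * contrA phi Psi j))"
    unfolding cinner_def projA_tensor_id_def contrA_def
    by (simp add: UNIV_Times_UNIV [symmetric] sum.cartesian_product del: UNIV_Times_UNIV)
       (rule sum.cong; clarsimp)
  also have "\<dots> = (\<Sum>j\<in>UNIV. \<Sum>i\<in>UNIV. cnj (Psi (i, j)) * (phi i * contrA phi Psi j))"
    by (rule sum.swap)
  also have "\<dots> = cinner (contrA phi Psi) (contrA phi Psi)"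
    unfolding cinner_def by (simp add: contrA_def sum_distrib_right ac_simps)
  finally show ?thesis .
qed

lemma contrB_relA_nonzero:
  assumes "contrA phi Psi \<noteq> (\<lambda>_. 0)"
  shows "contrB (relA Psi phi) Psi \<noteq> (\<lambda>_. 0)"
proof
  assume "contrB (relA Psi phi) Psi = (\<lambda>_. 0)"
  then have "cinner (relA Psi phi) (contrA phi Psi) = 0"
    by (simp add: cinner_contrA)
  then show False
    using vnorm_pos[OF assms] by (simp add: relA_def cinner_normalize_vec_self)
qed

lemma contrA_relB_nonzero:
  assumes "contrB chi Psi \<noteq> (\<lambda>_. 0)"
  shows "contrA (relB Psi chi) Psi \<noteq> (\<lambda>_. 0)"
proof
  assume "contrA (relB Psi chi) Psi = (\<lambda>_. 0)"
  then have "cinner (relB Psi chi) (contrB chi Psi) = 0"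
    by (metis cinner_contrA cinner_zero_right)
  then show False
    using vnorm_pos[OF assms] by (simp add: relB_def cinner_normalize_vec_self)
qed

definition reduced_op :: "('a::finite \<times> 'b::finite \<Rightarrow> complex) \<Rightarrow> ('a \<Rightarrow> complex) \<Rightarrow> ('a \<Rightarrow> complex)" where
  "reduced_op Psi phi = contrB (contrA phi Psi) Psi"

lemma reduced_op_selfadjoint: "cinner (reduced_op Psi u) w = cinner u (reduced_op Psi w)"
proof -
  have "cinner (reduced_op Psi u) w = cnj (cinner (contrA u Psi) (contrA w Psi))"
    unfolding reduced_op_def by (subst cinner_commute) (simp add: cinner_contrA)
  also have "\<dots> = cinner (contrA w Psi) (contrA u Psi)"
    by (rule cinner_commute [symmetric])
  also have "\<dots> = cinner u (reduced_op Psi w)"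
    unfolding reduced_op_def by (rule cinner_contrA)
  finally show ?thesis .
qed

lemma cinner_reduced_op_self:
  "cinner phi (reduced_op Psi phi) = cinner (contrA phi Psi) (contrA phi Psi)"
  unfolding reduced_op_def by (simp add: cinner_contrA)

lemma phi_seq_Suc_reduced_op:
  "phi_seq Psi phi1 (Suc n) =
     (\<lambda>i. of_real (1 / vnorm (contrB (chi_seq Psi phi1 n) Psi) * (1 / vnorm (contrA (phi_seq Psi phi1 n) Psi)))
          * reduced_op Psi (phi_seq Psi phi1 n) i)"
  unfolding phi_seq.simps chi_seq_def relA_def relB_def normalize_vec_eq contrB_scale_of_real reduced_op_def
  by (simp add: ac_simps)

text \<open>
  For \<open>p (n + 2)\<close> move one factor of the self-adjoint \<open>L\<close> across the inner product:
  \<open>\<langle>p m, p (m + d + 2)\<rangle>\<close> is a positive multiple of \<open>\<langle>p (m + 1), p (m + 1 + d)\<rangle>\<close>.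
\<close>
lemma cinner_positive_iterates_pos:
  fixes L :: "('a::finite \<Rightarrow> complex) \<Rightarrow> ('a \<Rightarrow> complex)"
  assumes selfadjoint: "\<And>u w. cinner (L u) w = cinner u (L w)"
    and iterate: "\<And>n. p (Suc n) = (\<lambda>i. of_real (k n) * L (p n) i)"
    and k_pos: "\<And>n. k n > 0"
    and positive: "\<And>n. cinner (p n) (L (p n)) > 0"
  shows "cinner (p m) (p (m + d)) > 0"
proof (induction d arbitrary: m rule: nat_induct2)
  case 0
  have "p m \<noteq> (\<lambda>_. 0)"
    using positive[of m] by auto
  then show ?case by (simp add: cinner_self_pos)
next
  case 1
  show ?case
    using of_real_mult_pos[OF k_pos positive] by (simp add: iterate cinner_scale_right)
next
  case (step d)
  have L_p: "L (p m) = (\<lambda>i. of_real (1 / k m) * p (Suc m) i)"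
    using k_pos[of m] by (simp add: iterate)
  have "p (m + (d + 2)) = (\<lambda>i. of_real (k (Suc m + d)) * L (p (Suc m + d)) i)"
    using iterate[of "Suc m + d"] by simp
  then have "cinner (p m) (p (m + (d + 2))) = of_real (k (Suc m + d)) * cinner (L (p m)) (p (Suc m + d))"
    by (simp add: cinner_scale_right selfadjoint)
  also have "\<dots> = of_real (k (Suc m + d)) * (of_real (1 / k m) * cinner (p (Suc m)) (p (Suc m + d)))"
    by (simp only: L_p cinner_scale_of_real_left)
  also have "\<dots> > 0"
    using k_pos step.IH[of "Suc m"] by (intro of_real_mult_pos) simp_all
  finally show ?case
    by (simp add: add.assoc)
qed

theorem mainTheorem9:
  fixes Psi :: "'a::finite \<times> 'b::finite \<Rightarrow> complex"
    and phi1 :: "'a \<Rightarrow> complex"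
  assumes "unit_vec Psi"
    and "unit_vec phi1"
    and "cinner Psi (projA_tensor_id phi1 Psi) > 0"
  shows "(\<forall>n. contrA (phi_seq Psi phi1 n) Psi \<noteq> (\<lambda>_. 0)
            \<and> contrB (chi_seq Psi phi1 n) Psi \<noteq> (\<lambda>_. 0))
       \<and> (\<forall>n. cinner phi1 (phi_seq Psi phi1 n) \<noteq> 0)"
proof -
  have contrA_nonzero: "contrA (phi_seq Psi phi1 n) Psi \<noteq> (\<lambda>_. 0)" for n
  proof (induction n)
    case 0
    then show ?case
      using assms(3) by (auto simp: cinner_projA_tensor_id)
  next
    case (Suc n)
    then show ?case
      by (simp add: contrA_relB_nonzero contrB_relA_nonzero chi_seq_def)
  qed
  have contrB_nonzero: "contrB (chi_seq Psi phi1 n) Psi \<noteq> (\<lambda>_. 0)" for n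
    using contrA_nonzero by (simp add: chi_seq_def contrB_relA_nonzero)
  have "cinner (phi_seq Psi phi1 0) (phi_seq Psi phi1 (0 + n)) > 0" for n
  proof (rule cinner_positive_iterates_pos [where L = "reduced_op Psi"],
      rule reduced_op_selfadjoint, rule phi_seq_Suc_reduced_op)
    show "1 / vnorm (contrB (chi_seq Psi phi1 m) Psi) * (1 / vnorm (contrA (phi_seq Psi phi1 m) Psi)) > 0" for m
      using vnorm_pos[OF contrA_nonzero] vnorm_pos[OF contrB_nonzero] by simp
    show "cinner (phi_seq Psi phi1 m) (reduced_op Psi (phi_seq Psi phi1 m)) > 0" for m
      using contrA_nonzero by (simp add: cinner_reduced_op_self cinner_self_pos)
  qed
  then show ?thesis
    using contrA_nonzero contrB_nonzero by (metis add_0 less_irrefl phi_seq.simps(1))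
qed

end
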